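(* For all $n\ge1$, $k\ge1$ and every $\pi\in\mathbf{C}(n,k)$, the list $\mathcal{C}(\pi)$ has flip sequence $\sigma^k_n$; that is, if $\mathcal{C}(\pi)=L_1,L_2,\dots,L_N$ and $\sigma^k_n=f_1,f_2,\dots,f_{N'}$, then $N'=N-1$ and $L_{t+1}=\mathrm{flip}_{f_t}(L_t)$ for all $1\le t\le N-1$.
   Context: Fix integers $n\ge1$, $k\ge1$. A $k$-coloured permutation of $\{1,\dots,n\}$ is a sequence $\pi=p_1p_2\cdots p_n$ with $p_i=v_i^{c_i}$, where $v_1\cdots v_n$ is a permutation of $\{1,\dots,n\}$ and each $c_i\in\{0,\dots,k-1\}$; the set of these is $\mathbf{C}(n,k)$. A pre-perm is a prefix $p_1\cdots p_j$ ($1\le j\le n$) of some element of $\mathbf{C}(n,k)$. For $p=v^c$ and integer $s$, $p^{+s}=v^{(c+s)\bmod k}$; for $\mathbf{p}=p_1\cdots p_j$, $\mathbf{p}^{+s}=p_1^{+s}\cdots p_j^{+s}$. For $1\le i\le n$ and $\pi=p_1\cdots p_n$, the flip $\mathrm{flip}_i(\pi)=p_i^{+1}p_{i-1}^{+1}\cdots p_1^{+1}p_{i+1}\cdots p_n$ (reverse the first $i$ entries and increment their colours mod $k$). For a pre-perm $\mathbf{p}$ of length $j$, $\rho(\mathbf{p})=r_1\cdots r_m$ ($m=kj$) is the concatenation $\mathbf{p}^{+(k-1)}\mathbf{p}^{+(k-2)}\cdots\mathbf{p}^{+0}$ viewed circularly (indices mod $m$), and $\rho(\mathbf{p})_i=r_{i-j+1}\cdots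 r_{i-1}$ (length $j-1$, indices mod $m$). The list $\mathcal{C}(\mathbf{p})$: if $j=1$, $\mathcal{C}(p_1)=p_1^{+0},p_1^{+1},\dots,p_1^{+(k-1)}$; if $j\ge2$, $\mathcal{C}(\mathbf{p})$ is the concatenation for $i=m,m-1,\dots,1$ of the lists obtained from $\mathcal{C}(\rho(\mathbf{p})_i)$ by appending $r_i$ to every entry. The sequence $\sigma^k_n$ is defined recursively by $\sigma^k_1=1^{k-1}$ (the value $1$ repeated $k-1$ times; empty if $k=1$) and, for $n>1$, $\sigma^k_n=(\sigma^k_{n-1},n)^{kn-1},\sigma^k_{n-1}$, i.e. $kn-1$ copies of the block "$\sigma^k_{n-1}$ followed by $n$", followed by one more copy of $\sigma^k_{n-1}$. *)

theory Defs
  imports Main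
begin

text \<open>A coloured entry v^c is the pair (v, c); colours are naturals in {0..<k}.\<close>
type_synonym centry = "nat \<times> nat"

definition colperms :: "nat \<Rightarrow> nat \<Rightarrow> centry list set" where
  "colperms n k = {\<pi>. length \<pi> = n \<and> distinct (map fst \<pi>) \<and> set (map fst \<pi>) = {1..n}
                        \<and> (\<forall>p\<in>set \<pi>. snd p < k)}"

definition incr :: "nat \<Rightarrow> nat \<Rightarrow> centry \<Rightarrow> centry" where
  "incr k s p = (fst p, (snd p + s) mod k)"

definition flip :: "nat \<Rightarrow> nat \<Rightarrow> centry list \<Rightarrow> centry list" where
  "flip k i \<pi> = map (incr k 1) (rev (take i \<pi>)) @ drop i \<pi>"

text \<open>rho(p) = p^{+(k-1)} p^{+(k-2)} ... p^{+0} as a list r_1 ... r_m (stored 0-based)\<close>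
definition rho :: "nat \<Rightarrow> centry list \<Rightarrow> centry list" where
  "rho k p = concat (map (\<lambda>s. map (incr k (k - 1 - s)) p) [0..<k])"

text \<open>r_x for an integer index x, taken circularly modulo m (1-based)\<close>
definition rr :: "nat \<Rightarrow> centry list \<Rightarrow> int \<Rightarrow> centry" where
  "rr k p x = rho k p ! nat ((x - 1) mod int (length (rho k p)))"

definition rhoi :: "nat \<Rightarrow> centry list \<Rightarrow> nat \<Rightarrow> centry list" where
  "rhoi k p i = map (\<lambda>t. rr k p (int i - int (length p) + 1 + int t)) [0..<length p - 1]"

text \<open>The list C(p), defined by recursion on the length (depth parameter d = length p).\<close>
fun Caux :: "nat \<Rightarrow> nat \<Rightarrow> centry list \<Rightarrow> centry list list" where
  "Caux k 0 p = []"
| "Caux k (Suc d) p =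
     (if length p = 1 then map (\<lambda>s. [incr k s (hd p)]) [0..<k]
      else concat (map (\<lambda>i. map (\<lambda>L. L @ [rr k p (int i)]) (Caux k d (rhoi k p i)))
                       (rev [1..<length (rho k p) + 1])))"

definition Clist :: "nat \<Rightarrow> centry list \<Rightarrow> centry list list" where
  "Clist k p = Caux k (length p) p"

fun sigma :: "nat \<Rightarrow> nat \<Rightarrow> nat list" where
  "sigma k 0 = []"
| "sigma k (Suc 0) = replicate (k - 1) 1"
| "sigma k (Suc (Suc n)) =
     concat (replicate (k * Suc (Suc n) - 1) (sigma k (Suc n) @ [Suc (Suc n)])) @ sigma k (Suc n)"

end

theory Submission imports Defs begin

(* By induction on the length j of p: C(p) starts at p, ends at map (incr k (k - 1)) (rev p),
   the preimage of p under flip_j, and has flip sequence sigma^k_j.  For j >= 2, C(p) is the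
   concatenation over i = m, ..., 1 of the lists C(rho(p)_i) with r_i appended; inside each
   block only the first j - 1 entries move, so each block has flip sequence sigma^k_(j-1).
   Block i + 1 ends with rho(p)_(i+1), reversed and with colours decreased, followed by r_(i+1);
   flip_j turns this into r_(i-j+1) ... r_i, the first entry of block i, because
   r_(x-j) = r_x^(+1) in the circular sequence rho(p).  The first block starts at p and the
   last one ends at the required endpoint. *)

fun has_flip_seq :: "nat \<Rightarrow> centry list list \<Rightarrow> nat list \<Rightarrow> bool" where
  "has_flip_seq k [] fs \<longleftrightarrow> False"
| "has_flip_seq k [L] fs \<longleftrightarrow> fs = []"
| "has_flip_seq k (L # L' # Ls) fs \<longleftrightarrow>
     (case fs of [] \<Rightarrow> False | f # fs' \<Rightarrow> L' = flip k f L \<and> has_flip_seq k (L' # Ls) fs')"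

lemma has_flip_seq_nth:
  assumes "has_flip_seq k Ls fs"
  shows "length fs = length Ls - 1 \<and>
         (\<forall>t. t + 1 < length Ls \<longrightarrow> Ls ! (t + 1) = flip k (fs ! t) (Ls ! t))"
  using assms
proof (induction k Ls fs rule: has_flip_seq.induct)
  case (3 k L L' Ls fs)
  then obtain f fs' where "fs = f # fs'" "L' = flip k f L" "has_flip_seq k (L' # Ls) fs'"
    by (auto split: list.splits)
  with 3 show ?case
    by (auto simp: nth_Cons split: nat.split)
qed auto

lemma has_flip_seq_nonempty: "has_flip_seq k Ls fs \<Longrightarrow> Ls \<noteq> []"
  by (cases Ls) auto

lemma has_flip_seq_append:
  "has_flip_seq k Ls fs \<Longrightarrow> has_flip_seq k Ms gs \<Longrightarrow> hd Ms = flip k f (last Ls) \<Longrightarrow>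
   has_flip_seq k (Ls @ Ms) (fs @ f # gs)"
proof (induction k Ls fs rule: has_flip_seq.induct)
  case (2 k L fs)
  then show ?case by (cases Ms) auto
qed (auto split: list.splits)

lemma has_flip_seq_map_snoc:
  assumes "has_flip_seq k Ls fs" "\<forall>L\<in>set Ls. length L = d" "\<forall>f\<in>set fs. f \<le> d"
  shows "has_flip_seq k (map (\<lambda>L. L @ [x]) Ls) fs"
  using assms
  by (induction k Ls fs rule: has_flip_seq.induct) (auto split: list.splits simp: flip_def)

lemma has_flip_seq_concat_desc:
  assumes "1 \<le> m" "\<forall>i\<in>{1..m}. has_flip_seq k (g i) fs"
    and "\<forall>i\<in>{1..<m}. hd (g i) = flip k f (last (g (Suc i)))"
  shows "has_flip_seq k (concat (map g (rev [1..<Suc m]))) (concat (replicate (m - 1) (fs @ [f])) @ fs)"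
  using assms
proof (induction m rule: nat_induct_at_least)
  case base
  then show ?case by simp
next
  case (Suc m)
  have IH: "has_flip_seq k (concat (map g (rev [1..<Suc m]))) (concat (replicate (m - 1) (fs @ [f])) @ fs)"
    using Suc by simp
  have "has_flip_seq k (g m) fs"
    using Suc.prems(1) Suc.hyps by simp
  then have "g m \<noteq> []"
    by (rule has_flip_seq_nonempty)
  then have "hd (concat (map g (rev [1..<Suc m]))) = hd (g m)"
    using Suc.hyps by simp
  also have "\<dots> = flip k f (last (g (Suc m)))"
    using Suc by simp
  finally have "has_flip_seq k (g (Suc m) @ concat (map g (rev [1..<Suc m])))
                  (fs @ f # concat (replicate (m - 1) (fs @ [f])) @ fs)"
    using has_flip_seq_append[OF _ IH] Suc.prems(1) by simp
  moreover have "fs @ f # concat (replicate (m - 1) (fs @ [f])) @ fs = concat (replicate m (fs @ [f])) @ fs"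
    using Suc.hyps by (cases m) auto
  moreover have "concat (map g (rev [1..<Suc (Suc m)])) = g (Suc m) @ concat (map g (rev [1..<Suc m]))"
    by simp
  ultimately show ?case
    by (metis diff_Suc_1)
qed

lemma hd_concat_map_rev_upt:
  "1 \<le> m \<Longrightarrow> g m \<noteq> [] \<Longrightarrow> hd (concat (map g (rev [1..<Suc m]))) = hd (g m)"
  by simp

lemma last_concat_map_rev_upt:
  assumes "1 \<le> m" "g 1 \<noteq> []"
  shows "last (concat (map g (rev [1..<Suc m]))) = last (g 1)"
proof -
  have "rev [1..<Suc m] = rev [Suc 1..<Suc m] @ [1]"
    using assms(1) by (simp add: upt_conv_Cons del: upt_Suc)
  then show ?thesis
    using assms(2) by (simp del: upt_Suc)
qed

lemma incr_incr: "incr k a (incr k b q) = incr k (a + b) q"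
  by (simp add: incr_def mod_add_right_eq add.commute add.left_commute)

lemma incr_mod: "incr k (s mod k) q = incr k s q"
  by (simp add: incr_def mod_add_right_eq)

lemma incr_0: "snd q < k \<Longrightarrow> incr k 0 q = q"
  by (simp add: incr_def)

lemma snd_incr_less: "0 < k \<Longrightarrow> snd (incr k s q) < k"
  by (simp add: incr_def)

lemma has_flip_seq_colour_cycle:
  "1 \<le> K \<Longrightarrow> has_flip_seq k (map (\<lambda>s. [incr k s a]) [0..<K]) (replicate (K - 1) 1)"
proof (induction K rule: nat_induct_at_least)
  case (Suc K)
  have "has_flip_seq k (map (\<lambda>s. [incr k s a]) [0..<K] @ [[incr k K a]]) (replicate (K - 1) 1 @ [1])"
    using Suc by (intro has_flip_seq_append) (auto simp: last_map flip_def incr_incr)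
  then show ?case
    using Suc.hyps by (cases K) (auto simp: replicate_append_same)
qed simp

lemma nth_concat_map_upt_uniform:
  assumes "\<forall>s<K. length (f s) = j" "y < K * j"
  shows "concat (map f [0..<K]) ! y = f (y div j) ! (y mod j)"
  using assms
proof (induction K arbitrary: y)
  case (Suc K)
  have len: "length (concat (map f [0..<K])) = K * j"
    using Suc.prems(1) by (induction K) auto
  show ?case
  proof (cases "y < K * j")
    case True
    then show ?thesis using Suc len by (simp add: nth_append)
  next
    case False
    then have "y div j = K" "y mod j = y - K * j"
      using Suc.prems(2) by (auto simp: div_nat_eqI mod_nat_eqI mult.commute)
    then show ?thesis using False len by (simp add: nth_append)
  qed
qed simp

lemma length_rho: "length (rho k p) = k * length p"
  by (simp add: rho_def length_concat o_def sum_list_triv)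

lemma nth_rho:
  assumes "y < k * length p"
  shows "rho k p ! y = incr k (k - 1 - y div length p) (p ! (y mod length p))"
proof -
  have "y mod length p < length p"
    using assms by (cases "length p") auto
  then show ?thesis
    unfolding rho_def using assms by (subst nth_concat_map_upt_uniform[where j="length p"]) auto
qed

lemma rr_int_Suc: "y < k * length p \<Longrightarrow> rr k p (int (Suc y)) = rho k p ! y"
  by (simp add: rr_def length_rho flip: of_nat_mult zmod_int)

lemma rr_add_period: "rr k p (x + int (k * length p)) = rr k p x"
proof -
  have "x + int (k * length p) - 1 = (x - 1) + int (k * length p)"
    by simp
  then show ?thesis
    by (simp only: rr_def length_rho mod_add_self2)
qed

lemma snd_rr_less: "0 < k \<Longrightarrow> p \<noteq> [] \<Longrightarrow> snd (rr k p x) < k"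
  by (simp add: rr_def length_rho nat_less_iff nth_rho snd_incr_less)

lemma nth_rho_sub_length:
  assumes "length p \<le> y" "y < k * length p"
  shows "rho k p ! (y - length p) = incr k 1 (rho k p ! y)"
proof -
  have "0 < length p"
    using assms(2) by (cases "length p") auto
  then have "y div length p = Suc ((y - length p) div length p)"
    "(y - length p) mod length p = y mod length p"
    using assms(1) by (simp_all add: le_div_geq le_mod_geq)
  moreover have "y div length p < k"
    using assms(2) by (simp add: less_mult_imp_div_less)
  ultimately have "k - 1 - (y - length p) div length p = 1 + (k - 1 - y div length p)"
    by simp
  then show ?thesis
    using assms \<open>y div length p = Suc ((y - length p) div length p)\<close>
      \<open>(y - length p) mod length p = y mod length p\<close>
    by (simp add: nth_rho incr_incr)
qed

lemma nth_rho_add_last_block: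
  assumes "0 < k" "y < length p"
  shows "rho k p ! (y + (k - 1) * length p) = incr k 1 (rho k p ! y)"
proof -
  obtain k' where k': "k = Suc k'"
    using assms(1) by (cases k) auto
  have "length p \<noteq> 0"
    using assms(2) by linarith
  then have "rho k p ! (y + (k - 1) * length p) = incr k 0 (p ! y)"
    using assms(2) by (simp add: nth_rho k')
  also have "\<dots> = incr k 1 (incr k (k - 1) (p ! y))"
    using assms(1) incr_mod[of k k] by (simp add: incr_incr)
  also have "\<dots> = incr k 1 (rho k p ! y)"
    using assms(2) k' by (simp add: nth_rho)
  finally show ?thesis .
qed

lemma rr_shift:
  assumes "0 < k" "p \<noteq> []"
  shows "rr k p (x - int (length p)) = incr k 1 (rr k p x)"
proof -
  define j m where "j = length p" and "m = k * j"
  define y where "y = nat ((x - 1) mod int m)"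
  have "0 < j" "j \<le> m"
    using assms by (simp_all add: j_def m_def)
  then have y: "int y = (x - 1) mod int m" "y < m"
    by (simp_all add: y_def nat_less_iff)
  have mod_shift: "(x - int j - 1) mod int m = (int y - int j) mod int m"
    by (metis y(1) diff_right_commute mod_diff_left_eq)
  have rr_x: "rr k p x = rho k p ! y"
    by (simp add: rr_def length_rho y_def j_def m_def)
  show ?thesis
  proof (cases "j \<le> y")
    case True
    then have "(x - int j - 1) mod int m = int (y - j)"
      using mod_shift y(2) by simp
    then have "rr k p (x - int j) = rho k p ! (y - j)"
      by (simp add: rr_def length_rho j_def m_def)
    then show ?thesis
      using True y(2) rr_x nth_rho_sub_length[of p y k] by (simp add: j_def m_def)
  next
    case False
    obtain k' where k': "k = Suc k'"
      using assms(1) by (cases k) auto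
    have "(int y - int j) mod int m = (int y - int j + int m) mod int m"
      by simp
    also have "\<dots> = int y - int j + int m"
      using False y(2) \<open>j \<le> m\<close> by (intro mod_pos_pos_trivial) auto
    finally have "(x - int j - 1) mod int m = int (y + (k - 1) * j)"
      using mod_shift by (simp add: m_def k')
    then have "rr k p (x - int j) = rho k p ! (y + (k - 1) * j)"
      by (simp add: rr_def length_rho j_def m_def flip: of_nat_mult of_nat_add)
    then show ?thesis
      using False rr_x nth_rho_add_last_block[OF assms(1), of y p] by (simp add: j_def)
  qed
qed

definition window :: "nat \<Rightarrow> centry list \<Rightarrow> nat \<Rightarrow> centry list" where
  "window k p i = map (\<lambda>t. rr k p (int i - int (length p) + 1 + int t)) [0..<length p]"

lemma length_rhoi: "length (rhoi k p i) = length p - 1"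
  by (simp add: rhoi_def)

lemma snd_rhoi_less: "0 < k \<Longrightarrow> p \<noteq> [] \<Longrightarrow> \<forall>q\<in>set (rhoi k p i). snd q < k"
  by (auto simp: rhoi_def snd_rr_less)

lemma window_eq_rhoi_snoc: "p \<noteq> [] \<Longrightarrow> window k p i = rhoi k p i @ [rr k p (int i)]"
  by (cases p) (simp_all add: window_def rhoi_def)

lemma window_eq_Cons_rhoi_Suc:
  assumes "0 < k" "p \<noteq> []"
  shows "window k p i = incr k 1 (rr k p (int (Suc i))) # rhoi k p (Suc i)"
proof -
  obtain l where l: "length p = Suc l"
    using assms(2) by (cases p) auto
  have "rr k p (int i - int (length p) + 1) = incr k 1 (rr k p (int (Suc i)))"
    using rr_shift[OF assms, of "int (Suc i)"] by (simp add: algebra_simps)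
  then show ?thesis
    by (simp add: window_def rhoi_def l map_upt_Suc algebra_simps del: upt_Suc)
qed

lemma window_period_end:
  assumes "0 < k" "\<forall>q\<in>set p. snd q < k"
  shows "window k p (k * length p) = p"
proof (rule nth_equalityI)
  fix t assume "t < length (window k p (k * length p))"
  then have t: "t < length p"
    by (simp add: window_def)
  obtain k' where k': "k = Suc k'"
    using assms(1) by (cases k) auto
  define y where "y = t + k' * length p"
  have "length p \<noteq> 0"
    using t by linarith
  then have y: "y < k * length p" "y div length p = k - 1" "y mod length p = t"
    using t by (simp_all add: y_def k')
  have index: "int (k * length p) - int (length p) + 1 + int t = int (Suc y)"
    by (simp add: y_def k')
  have "window k p (k * length p) ! t = rr k p (int (k * length p) - int (length p) + 1 + int t)"
    using t by (simp add: window_def)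
  also have "\<dots> = rho k p ! y"
    unfolding index by (rule rr_int_Suc[OF y(1)])
  also have "\<dots> = p ! t"
    using t y assms(2) by (simp add: nth_rho incr_0)
  finally show "window k p (k * length p) ! t = p ! t" .
qed (simp add: window_def)

lemma rhoi_add_period: "rhoi k p (i + k * length p) = rhoi k p i"
proof -
  have "int (i + k * length p) - int (length p) + 1 + int t
          = (int i - int (length p) + 1 + int t) + int (k * length p)" for t
    by simp
  then show ?thesis
    by (simp only: rhoi_def rr_add_period)
qed

lemma rhoi_1:
  assumes "0 < k" "p \<noteq> []" "\<forall>q\<in>set p. snd q < k"
  shows "rhoi k p 1 = tl p"
proof -
  have "rhoi k p 1 = rhoi k p (Suc (k * length p))"
    using rhoi_add_period[of k p 1] by simp
  also have "\<dots> = tl (window k p (k * length p))"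
    using window_eq_Cons_rhoi_Suc[OF assms(1,2)] by simp
  finally show ?thesis
    using window_period_end[OF assms(1,3)] by simp
qed

lemma rr_1: "0 < k \<Longrightarrow> p \<noteq> [] \<Longrightarrow> rr k p 1 = incr k (k - 1) (hd p)"
  using rr_int_Suc[of 0 k p] by (simp add: nth_rho hd_conv_nth)

lemma flip_length: "flip k (length xs) xs = map (incr k 1) (rev xs)"
  by (simp add: flip_def)

lemma flip_reversed_window:
  assumes "0 < k" "p \<noteq> []"
  shows "flip k (length p) (map (incr k (k - 1)) (rev (rhoi k p (Suc i))) @ [rr k p (int (Suc i))])
           = window k p i"
proof -
  have "incr k 1 (incr k (k - 1) q) = q" if "q \<in> set (rhoi k p (Suc i))" for q
    using that snd_rhoi_less[OF assms] assms(1) incr_mod[of k k q]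
    by (simp add: incr_incr incr_0)
  then have "map (incr k 1 \<circ> incr k (k - 1)) (rhoi k p (Suc i)) = rhoi k p (Suc i)"
    by (simp add: map_idI)
  moreover have "length p = length (map (incr k (k - 1)) (rev (rhoi k p (Suc i))) @ [rr k p (int (Suc i))])"
    using assms(2) by (simp add: length_rhoi)
  ultimately show ?thesis
    by (simp only: flip_length) (simp add: rev_map window_eq_Cons_rhoi_Suc[OF assms])
qed

lemma sigma_entry_le: "f \<in> set (sigma k n) \<Longrightarrow> f \<le> n"
  by (induction k n rule: sigma.induct) (auto simp: set_replicate_conv_if split: if_splits)

lemma sigma_eq_blocks:
  assumes "2 \<le> n"
  shows "sigma k n = concat (replicate (k * n - 1) (sigma k (n - 1) @ [n])) @ sigma k (n - 1)"
proof -
  obtain d where "n = Suc (Suc d)"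
    using assms le_Suc_ex[of 2 n] by auto
  then show ?thesis
    by simp
qed

lemma Clist_singleton: "Clist k [a] = map (\<lambda>s. [incr k s a]) [0..<k]"
  by (simp add: Clist_def)

lemma Clist_step:
  assumes "2 \<le> length p"
  shows "Clist k p = concat (map (\<lambda>i. map (\<lambda>L. L @ [rr k p (int i)]) (Clist k (rhoi k p i)))
                                 (rev [1..<Suc (k * length p)]))"
proof -
  obtain d where "length p = Suc d" "d \<noteq> 0"
    using assms by (cases "length p") auto
  then show ?thesis
    by (simp add: Clist_def length_rhoi length_rho)
qed

definition flip_listing :: "nat \<Rightarrow> centry list \<Rightarrow> centry list list \<Rightarrow> bool" where
  "flip_listing k p Ls \<longleftrightarrow>
     has_flip_seq k Ls (sigma k (length p)) \<and> hd Ls = p \<and>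
     last Ls = map (incr k (k - 1)) (rev p) \<and> (\<forall>L\<in>set Ls. length L = length p)"

lemma flip_listing_singleton:
  assumes "0 < k" "snd a < k"
  shows "flip_listing k [a] (Clist k [a])"
proof -
  have "[0..<k] \<noteq> []"
    using assms(1) by simp
  then show ?thesis
    using assms has_flip_seq_colour_cycle[of k k a]
    by (simp add: flip_listing_def Clist_singleton incr_0 hd_map last_map hd_upt last_upt)
qed

lemma flip_listing_step:
  assumes "0 < k" "2 \<le> length p" "\<forall>q\<in>set p. snd q < k"
    and IH: "\<And>i. flip_listing k (rhoi k p i) (Clist k (rhoi k p i))"
  shows "flip_listing k p (Clist k p)"
proof -
  define j m s where "j = length p" and "m = k * j" and "s = sigma k (j - 1)"
  define g where "g = (\<lambda>i. map (\<lambda>L. L @ [rr k p (int i)]) (Clist k (rhoi k p i)))"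
  have "p \<noteq> []" "1 \<le> m"
    using assms(1,2) by (auto simp: m_def j_def)
  have IH': "has_flip_seq k (Clist k (rhoi k p i)) s" "Clist k (rhoi k p i) \<noteq> []"
    "hd (Clist k (rhoi k p i)) = rhoi k p i"
    "last (Clist k (rhoi k p i)) = map (incr k (k - 1)) (rev (rhoi k p i))"
    "\<forall>L\<in>set (Clist k (rhoi k p i)). length L = j - 1" for i
    using IH[of i] has_flip_seq_nonempty
    by (auto simp: flip_listing_def length_rhoi s_def j_def)
  have g: "has_flip_seq k (g i) s" "g i \<noteq> []" "hd (g i) = window k p i"
    "last (g i) = map (incr k (k - 1)) (rev (rhoi k p i)) @ [rr k p (int i)]" for i
    using IH'[of i] \<open>p \<noteq> []\<close> sigma_entry_le[of _ k "j - 1"]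
    by (auto simp: g_def s_def hd_map last_map window_eq_rhoi_snoc intro: has_flip_seq_map_snoc)
  define C where "C = concat (map g (rev [1..<Suc m]))"
  have Clist_eq: "Clist k p = C"
    using Clist_step[OF assms(2), of k] by (simp add: C_def g_def j_def m_def del: upt_Suc)
  have last_C: "last C = last (g 1)"
    unfolding C_def using \<open>1 \<le> m\<close> g(2) by (rule last_concat_map_rev_upt)
  have sigma_eq: "sigma k j = concat (replicate (m - 1) (s @ [j])) @ s"
    using sigma_eq_blocks[OF assms(2)] by (simp add: j_def m_def s_def)
  have "has_flip_seq k C (sigma k j)"
    unfolding C_def sigma_eq
    using \<open>1 \<le> m\<close> g flip_reversed_window[OF assms(1) \<open>p \<noteq> []\<close>]
    by (intro has_flip_seq_concat_desc) (auto simp: j_def)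
  moreover have "hd C = p"
    using \<open>1 \<le> m\<close> g(2,3)[of m] window_period_end[OF assms(1,3)]
    by (simp add: C_def hd_concat_map_rev_upt m_def j_def)
  moreover have "last C = map (incr k (k - 1)) (rev p)"
    using last_C g(4)[of 1] rhoi_1[OF assms(1) \<open>p \<noteq> []\<close> assms(3)] rr_1[OF assms(1) \<open>p \<noteq> []\<close>]
      \<open>p \<noteq> []\<close>
    by (cases p) simp_all
  moreover have "\<forall>L\<in>set C. length L = j"
    using IH'(5) assms(2) by (auto simp: C_def g_def j_def)
  ultimately show ?thesis
    unfolding flip_listing_def Clist_eq j_def by blast
qed

lemma flip_listing_Clist:
  assumes "0 < k" "p \<noteq> []" "\<forall>q\<in>set p. snd q < k"
  shows "flip_listing k p (Clist k p)"
  using assms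
proof (induction "length p" arbitrary: p rule: less_induct)
  case less
  show ?case
  proof (cases "length p = 1")
    case True
    then obtain a where "p = [a]"
      by (cases p) (auto simp: length_Suc_conv)
    then show ?thesis
      using less.prems flip_listing_singleton by simp
  next
    case False
    have "length p \<noteq> 0"
      using less.prems(2) by simp
    then have "2 \<le> length p"
      using False by linarith
    moreover have "flip_listing k (rhoi k p i) (Clist k (rhoi k p i))" for i
      using calculation less.prems length_rhoi[of k p i] by (intro less.hyps) (auto simp: snd_rhoi_less)
    ultimately show ?thesis
      using less.prems by (auto intro: flip_listing_step)
  qed
qed

theorem lemma2:
  fixes n k :: nat and \<pi> :: "centry list"
  assumes "n \<ge> 1" and "k \<ge> 1" and "\<pi> \<in> colperms n k"
  shows "length (sigma k n) = length (Clist k \<pi>) - 1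
       \<and> (\<forall>t. t + 1 < length (Clist k \<pi>) \<longrightarrow>
              Clist k \<pi> ! (t + 1) = flip k (sigma k n ! t) (Clist k \<pi> ! t))"
proof -
  have "length \<pi> = n" "\<forall>q\<in>set \<pi>. snd q < k"
    using assms(3) by (simp_all add: colperms_def)
  moreover have "\<pi> \<noteq> []"
    using assms(1) calculation(1) by auto
  ultimately have "flip_listing k \<pi> (Clist k \<pi>)"
    using assms(2) by (intro flip_listing_Clist) auto
  then have "has_flip_seq k (Clist k \<pi>) (sigma k n)"
    unfolding flip_listing_def \<open>length \<pi> = n\<close> by blast
  then show ?thesis
    by (rule has_flip_seq_nth)
qed

end
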